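(* For $k=0,\dots,7$ let $v_k=(\cos(k\pi/4),\sin(k\pi/4))$ (indices mod 8), let $E_k$ be the segment $[v_k,v_{k+1}]$, and let $a_k=1.4\,(\cos((2k+1)\pi/8),\sin((2k+1)\pi/8))$. For $S\subset\{0,\dots,7\}$ let $C_S$ be the closed polygonal curve obtained from the boundary of the regular octagon $v_0v_1\cdots v_7$ by replacing each edge $E_k$ with $k\in S$ by the two segments $[v_k,a_k]\cup[a_k,v_{k+1}]$ (i.e., appending to the octagon congruent isosceles triangles on the edges indexed by $S$). Let $X=C_{\{0,4,5,7\}}$ and $Y=C_{\{0,1,4,7\}}$, each regarded as an mm-space $\mathcal{X},\mathcal{Y}$ with extrinsic Euclidean distance and normalized arclength measure. Then $X$ and $Y$ are not related by any rigid motion of $\mathbb{R}^2$ (so $\mathcal{X}\not\approx\mathcal{Y}$), but $H_{\mathcal{X}}=H_{\mathcal{Y}}$.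
   Context: For an mm-space $\mathcal{X}=(X,d_X,\mu_X)$ (compact metric space with fully supported Borel probability measure), the global distance distribution is $H_{\mathcal{X}}(r)=\mu_X\otimes\mu_X(\{(x,x')\in X\times X: d_X(x,x')\le r\})$ for $r\geq0$. A plane curve is regarded as an mm-space with the restriction of the Euclidean distance of $\mathbb{R}^2$ and arclength measure normalized to total mass one. *)

theory Defs
  imports "HOL-Analysis.Analysis" "HOL-Probability.Probability"
begin

text \<open>The plane R^2 is modelled by the type complex (Euclidean distance = dist).\<close>

definition octv :: "nat \<Rightarrow> complex" where
  "octv k = cis (real k * pi / 4)"

definition apex :: "nat \<Rightarrow> complex" where
  "apex k = complex_of_real 1.4 * cis ((2 * real k + 1) * pi / 8)"

definition curve_vertices :: "nat set \<Rightarrow> complex list" where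
  "curve_vertices S = concat (map (\<lambda>k. if k \<in> S then [octv k, apex k] else [octv k]) [0..<8])"

definition poly_pt :: "complex list \<Rightarrow> real \<Rightarrow> complex" where
  "poly_pt P s = (let m = length P; i = nat \<lfloor>s\<rfloor>; t = s - of_int \<lfloor>s\<rfloor>
     in (1 - t) *\<^sub>R P ! (i mod m) + t *\<^sub>R P ! ((i + 1) mod m))"

definition poly_set :: "complex list \<Rightarrow> complex set" where
  "poly_set P = poly_pt P ` {0 .. real (length P)}"

definition edge_len :: "complex list \<Rightarrow> nat \<Rightarrow> real" where
  "edge_len P i = dist (P ! (i mod length P)) (P ! ((i + 1) mod length P))"

definition poly_len :: "complex list \<Rightarrow> real" where
  "poly_len P = (\<Sum>i<length P. edge_len P i)"

text \<open>Normalized arclength measure on the polygon: push-forward of |gamma'(s)| ds / length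
  under the parametrisation (|gamma'(s)| = length of the current edge).\<close>
definition arclen_measure :: "complex list \<Rightarrow> complex measure" where
  "arclen_measure P = distr
     (density lborel (\<lambda>s. ennreal (indicator {0..<real (length P)} s
                                     * edge_len P (nat \<lfloor>s\<rfloor>) / poly_len P)))
     borel (poly_pt P)"

definition dist_distr :: "complex measure \<Rightarrow> real \<Rightarrow> real" where
  "dist_distr \<mu> r = measure (\<mu> \<Otimes>\<^sub>M \<mu>) {(x, y). dist x y \<le> r}"

end

theory Submission
  imports Defs
begin

text \<open>
  Pushing the normalised arclength measure of a closed polygon forward edge by edge, the measure
  of \<open>{(x, y). dist x y \<le> r}\<close> becomes a double sum over ordered pairs of edges of the product
  of their relative lengths and the Lebesgue measure of the parameters \<open>(v, u) \<in> [0,1)\<^sup>2\<close>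
  at which the two edges come within distance \<open>r\<close>.  The curve \<open>C\<^sub>S\<close> is made of eight blocks,
  the \<open>k\<close>-th being the rotation by \<open>k\<pi>/4\<close> of the octagon edge \<open>[v\<^sub>0, v\<^sub>1]\<close> or of the two
  triangle sides \<open>[v\<^sub>0, a\<^sub>0] \<union> [a\<^sub>0, v\<^sub>1]\<close>, according as \<open>k \<in> S\<close>.  The pair term is
  rotation invariant, so \<open>H\<close> only depends on how many pairs \<open>(k, l)\<close> there are of each type
  \<open>(k \<in> S, l \<in> S, l - k mod 8)\<close>.  For \<open>{0,4,5,7}\<close> and \<open>{0,1,4,7}\<close> these counts agree,
  because the two sets have the same multiset of differences mod 8.

  The apices are exactly the points of \<open>C\<^sub>S\<close> of maximal norm \<open>7/5\<close>, and \<open>a\<^sub>0, a\<^sub>4\<close> are at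
  the distance \<open>14/5\<close> of a diameter.  An isometry \<open>X \<rightarrow> Y\<close> therefore sends them to an antipodal
  pair of apices of \<open>Y\<close>, hence, by the parallelogram law, sends \<open>a\<^sub>5\<close> and \<open>a\<^sub>7\<close> to apices
  as well; and two chords between apices have equal length only if the index differences agree up
  to sign mod 8, which no assignment of apices of \<open>Y\<close> satisfies.
\<close>

section \<open>Polygons\<close>

definition poly_edges :: "complex list \<Rightarrow> (complex \<times> complex) list" where
  "poly_edges P = map (\<lambda>i. (P ! (i mod length P), P ! ((i + 1) mod length P))) [0..<length P]"

lemma sum_list_map_upt: "(\<Sum>i\<leftarrow>[0..<n]. f i) = (\<Sum>i<n. f i)"
  by (simp add: interv_sum_list_conv_sum_set_nat lessThan_atLeast0)

lemma poly_len_eq_sum_poly_edges: "poly_len P = (\<Sum>e\<leftarrow>poly_edges P. dist (fst e) (snd e))"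
  by (simp add: poly_len_def edge_len_def poly_edges_def sum_list_map_upt)

lemma poly_pt_real_add:
  assumes "0 \<le> u" "u < 1"
  shows "poly_pt P (real i + u) = linepath (P ! (i mod length P)) (P ! ((i + 1) mod length P)) u"
proof -
  have "\<lfloor>real i + u\<rfloor> = int i" using assms by (simp add: floor_eq_iff)
  then show ?thesis by (simp add: poly_pt_def linepath_def Let_def)
qed

lemma poly_pt_of_nat: "i < length P \<Longrightarrow> poly_pt P (real i) = P ! i"
  using poly_pt_real_add[of 0 P i] by (simp add: linepath_def)

lemma set_subset_poly_set: "set P \<subseteq> poly_set P"
proof
  fix x assume "x \<in> set P"
  then obtain i where "i < length P" "x = P ! i"
    by (auto simp: in_set_conv_nth)
  then show "x \<in> poly_set P"
    unfolding poly_set_def by (intro image_eqI[of _ _ "real i"]) (simp_all add: poly_pt_of_nat)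
qed

lemma poly_set_obtain_edge:
  assumes "y \<in> poly_set P" "P \<noteq> []"
  obtains e t where "e \<in> set (poly_edges P)" "0 \<le> t" "t < 1" "y = linepath (fst e) (snd e) t"
proof -
  obtain s where "y = poly_pt P s" using assms(1) by (auto simp: poly_set_def)
  define i where "i = nat \<lfloor>s\<rfloor> mod length P"
  define t where "t = s - of_int \<lfloor>s\<rfloor>"
  have "i < length P" using assms(2) by (simp add: i_def)
  moreover have "y = linepath (P ! i) (P ! ((i + 1) mod length P)) t"
    by (simp add: \<open>y = poly_pt P s\<close> poly_pt_def linepath_def Let_def i_def t_def mod_Suc_eq)
  moreover have "0 \<le> t" "t < 1" by (simp_all add: t_def) linarith+
  ultimately show ?thesis
    by (intro that[of "(P ! i, P ! ((i + 1) mod length P))" t]) (auto simp: poly_edges_def)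
qed

lemma norm_linepath_le: "0 \<le> t \<Longrightarrow> t \<le> 1 \<Longrightarrow> norm (linepath p q t) \<le> (1 - t) * norm p + t * norm q"
  unfolding linepath_def by (rule order_trans[OF norm_triangle_ineq]) simp

lemma poly_set_norm_le:
  assumes "y \<in> poly_set P" "P \<noteq> []"
    and edges: "\<And>e. e \<in> set (poly_edges P) \<Longrightarrow> norm (fst e) \<le> R \<and> norm (snd e) \<le> R"
  shows "norm y \<le> R"
proof -
  obtain e t where e: "e \<in> set (poly_edges P)" "0 \<le> t" "t < 1" "y = linepath (fst e) (snd e) t"
    using poly_set_obtain_edge[OF assms(1,2)] .
  have "norm y \<le> (1 - t) * norm (fst e) + t * norm (snd e)"
    using e by (simp add: norm_linepath_le)
  also have "\<dots> \<le> (1 - t) * R + t * R"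
    using e edges[OF e(1)] by (intro add_mono mult_left_mono) auto
  finally show ?thesis by (simp add: algebra_simps)
qed

lemma poly_set_norm_eq_imp_vertex:
  assumes "y \<in> poly_set P" "P \<noteq> []" "norm y = R"
    and edges: "\<And>e. e \<in> set (poly_edges P) \<Longrightarrow>
                 norm (fst e) \<le> R \<and> norm (snd e) \<le> R \<and> (norm (fst e) < R \<or> norm (snd e) < R)"
  shows "\<exists>e\<in>set (poly_edges P). y = fst e"
proof -
  obtain e t where e: "e \<in> set (poly_edges P)" "0 \<le> t" "t < 1" "y = linepath (fst e) (snd e) t"
    using poly_set_obtain_edge[OF assms(1,2)] .
  have "t = 0"
  proof (rule ccontr)
    assume "t \<noteq> 0"
    have "R \<le> (1 - t) * norm (fst e) + t * norm (snd e)"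
      using e assms(3) by (metis norm_linepath_le less_imp_le)
    also have "\<dots> < (1 - t) * R + t * R"
    proof -
      have "0 < 1 - t" "0 < t" using e(2,3) \<open>t \<noteq> 0\<close> by auto
      with edges[OF e(1)] show ?thesis
        by (auto intro: add_less_le_mono add_le_less_mono mult_left_mono mult_strict_left_mono)
    qed
    finally show False by (simp add: algebra_simps)
  qed
  then show ?thesis using e by (auto simp: linepath_def)
qed

lemma poly_edges_eq_zip_rotate1: "poly_edges P = zip P (rotate1 P)"
  by (rule nth_equalityI) (simp_all add: poly_edges_def nth_rotate1)

lemma concat_map2_tl_hd:
  assumes "[] \<notin> set (B # Bs)"
  shows "concat (map2 (\<lambda>B B'. tl B @ [hd B']) (B # Bs) (Bs @ [C])) = tl B @ concat Bs @ [hd C]"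
  using assms by (induction Bs arbitrary: B) auto

lemma rotate1_concat:
  assumes "[] \<notin> set Bs"
  shows "rotate1 (concat Bs) = concat (map2 (\<lambda>B B'. tl B @ [hd B']) Bs (rotate1 Bs))"
proof (cases Bs)
  case (Cons B Cs)
  with assms have "B \<noteq> []" by auto
  with Cons show ?thesis
    using assms concat_map2_tl_hd[of B Cs B] by (simp add: rotate1_hd_tl)
qed simp

lemma zip_concat:
  "list_all2 (\<lambda>B C. length B = length C) Bs Cs \<Longrightarrow> zip (concat Bs) (concat Cs) = concat (map2 zip Bs Cs)"
  by (induction rule: list_all2_induct) simp_all

lemma poly_edges_concat:
  assumes "[] \<notin> set Bs"
  shows "poly_edges (concat Bs) = concat (map2 (\<lambda>B B'. zip B (tl B @ [hd B'])) Bs (rotate1 Bs))"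
proof -
  let ?succ = "\<lambda>B B'. tl B @ [hd B']"
  have "list_all2 (\<lambda>B C. length B = length C) Bs (map2 ?succ Bs (rotate1 Bs))"
    using assms by (auto simp: list_all2_conv_all_nth) (metis Suc_pred length_greater_0_conv nth_mem)
  moreover have "map2 zip Bs (map2 ?succ Bs (rotate1 Bs)) = map2 (\<lambda>B B'. zip B (?succ B B')) Bs (rotate1 Bs)"
    by (rule nth_equalityI) auto
  ultimately show ?thesis
    using assms by (simp add: poly_edges_eq_zip_rotate1 rotate1_concat zip_concat)
qed

section \<open>Arclength measure of a polygon\<close>

lemma poly_pt_measurable [measurable]: "poly_pt P \<in> borel_measurable borel"
proof -
  let ?F = "\<lambda>i s. (1 - (s - of_int \<lfloor>s\<rfloor>)) *\<^sub>R P ! (i mod length P)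
                 + (s - of_int \<lfloor>s\<rfloor>) *\<^sub>R P ! ((i + 1) mod length P)"
  have "(\<lambda>s::real. ?F (nat \<lfloor>s\<rfloor>) s) \<in> borel_measurable borel"
    by (rule measurable_compose_countable'[where I=UNIV]) auto
  moreover have "poly_pt P = (\<lambda>s. ?F (nat \<lfloor>s\<rfloor>) s)"
    by (simp add: poly_pt_def Let_def fun_eq_iff)
  ultimately show ?thesis by simp
qed

lemma linepath_measurable [measurable]: "linepath p q \<in> borel_measurable borel"
  by (intro borel_measurable_continuous_onI continuous_on_linepath)

lemma indicator_mult_floor_eq_sum:
  fixes f :: "nat \<Rightarrow> real"
  shows "indicator {0..<real m} s * f (nat \<lfloor>s\<rfloor>) = (\<Sum>i<m. f i * indicator {real i..<real i + 1} s)"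
proof -
  have ind: "indicator {real i..<real i + 1} s = (if i = nat \<lfloor>s\<rfloor> then indicator {0..} s else 0)" for i
    by (auto simp: indicator_def) linarith+
  have "(\<Sum>i<m. f i * indicator {real i..<real i + 1} s)
      = (\<Sum>i<m. if i = nat \<lfloor>s\<rfloor> then f i * indicator {0..} s else 0)"
    by (intro sum.cong refl) (simp only: ind, simp)
  also have "\<dots> = (if nat \<lfloor>s\<rfloor> < m then f (nat \<lfloor>s\<rfloor>) * indicator {0..} s else 0)"
    by (simp add: sum.delta)
  finally show ?thesis
    by (auto simp: indicator_def) linarith+
qed

lemma nn_integral_unit_interval_shift:
  fixes h :: "real \<Rightarrow> ennreal"
  assumes [measurable]: "h \<in> borel_measurable borel"
  shows "(\<integral>\<^sup>+s\<in>{real i..<real i + 1}. h s \<partial>lborel) = (\<integral>\<^sup>+u\<in>{0..<1}. h (real i + u) \<partial>lborel)"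
  using nn_integral_real_affine[where c=1 and t="real i" and f="\<lambda>s. h s * indicator {real i..<real i + 1} s"]
  by (simp add: indicator_def)

definition edge_weight :: "real \<Rightarrow> complex \<times> complex \<Rightarrow> ennreal" where
  "edge_weight L e = ennreal (dist (fst e) (snd e) / L)"

lemma arclen_density_eq_sum:
  "ennreal (indicator {0..<real (length P)} s * (edge_len P (nat \<lfloor>s\<rfloor>) / poly_len P))
     = (\<Sum>i<length P. ennreal (edge_len P i / poly_len P) * indicator {real i..<real i + 1} s)"
proof -
  let ?w = "\<lambda>i. edge_len P i / poly_len P"
  have w_nonneg: "0 \<le> ?w i" for i
    by (simp add: edge_len_def poly_len_def sum_nonneg)
  have "ennreal (indicator {0..<real (length P)} s * ?w (nat \<lfloor>s\<rfloor>))
      = (\<Sum>i<length P. ennreal (?w i * indicator {real i..<real i + 1} s))"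
    unfolding indicator_mult_floor_eq_sum[where f = ?w]
    by (rule sum_ennreal[symmetric], rule mult_nonneg_nonneg[OF w_nonneg indicator_pos_le])
  also have "\<dots> = (\<Sum>i<length P. ennreal (?w i) * indicator {real i..<real i + 1} s)"
    by (simp only: ennreal_mult'' ennreal_indicator indicator_pos_le)
  finally show ?thesis .
qed

lemma nn_integral_arclen_measure:
  fixes F :: "complex \<Rightarrow> ennreal"
  assumes [measurable]: "F \<in> borel_measurable borel"
  shows "(\<integral>\<^sup>+x. F x \<partial>arclen_measure P)
     = (\<Sum>e\<leftarrow>poly_edges P. edge_weight (poly_len P) e
          * (\<integral>\<^sup>+u\<in>{0..<1}. F (linepath (fst e) (snd e) u) \<partial>lborel))"
proof -
  let ?w = "\<lambda>i. edge_len P i / poly_len P"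
  have "(\<integral>\<^sup>+x. F x \<partial>arclen_measure P)
      = (\<integral>\<^sup>+s. ennreal (indicator {0..<real (length P)} s * ?w (nat \<lfloor>s\<rfloor>)) * F (poly_pt P s) \<partial>lborel)"
    unfolding arclen_measure_def
    by (subst nn_integral_distr) (auto simp: nn_integral_density)
  also have "\<dots> = (\<integral>\<^sup>+s. (\<Sum>i<length P.
                     ennreal (?w i) * (F (poly_pt P s) * indicator {real i..<real i + 1} s)) \<partial>lborel)"
    by (intro nn_integral_cong) (unfold arclen_density_eq_sum sum_distrib_right, simp only: ac_simps)
  also have "\<dots> = (\<Sum>i<length P. ennreal (?w i) * (\<integral>\<^sup>+s\<in>{real i..<real i + 1}. F (poly_pt P s) \<partial>lborel))"
    by (subst nn_integral_sum) (auto simp: nn_integral_cmult)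
  also have "\<dots> = (\<Sum>i<length P. ennreal (?w i) * (\<integral>\<^sup>+u\<in>{0..<1}. F (poly_pt P (real i + u)) \<partial>lborel))"
    by (simp add: nn_integral_unit_interval_shift)
  also have "\<dots> = (\<Sum>i<length P. ennreal (?w i) * (\<integral>\<^sup>+u\<in>{0..<1}.
                     F (linepath (P ! (i mod length P)) (P ! ((i + 1) mod length P)) u) \<partial>lborel))"
  proof -
    have "F (poly_pt P (real i + u)) * indicator {0..<1} u
        = F (linepath (P ! (i mod length P)) (P ! ((i + 1) mod length P)) u) * indicator {0..<1} u" for i u
      by (cases "u \<in> {0..<1}") (simp_all add: poly_pt_real_add)
    then show ?thesis by (simp only:)
  qed
  finally show ?thesis
    by (simp add: poly_edges_def sum_list_map_upt edge_len_def edge_weight_def)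
qed

lemma sets_arclen_measure [simp, measurable_cong]: "sets (arclen_measure P) = sets borel"
  by (simp add: arclen_measure_def)

lemma finite_measure_arclen_measure: "finite_measure (arclen_measure P)"
proof (rule finite_measureI)
  have "emeasure (arclen_measure P) (space (arclen_measure P)) = (\<integral>\<^sup>+x. 1 \<partial>arclen_measure P)"
    by simp
  also have "\<dots> = (\<Sum>e\<leftarrow>poly_edges P. edge_weight (poly_len P) e)"
    using nn_integral_arclen_measure[of "\<lambda>_. 1" P] by simp
  finally show "emeasure (arclen_measure P) (space (arclen_measure P)) \<noteq> \<infinity>"
    by (simp add: edge_weight_def sum_list_sum_nth)
qed

lemma nn_integral_sum_list_cmult:
  assumes "\<And>x. x \<in> set xs \<Longrightarrow> f x \<in> borel_measurable M"
  shows "(\<integral>\<^sup>+t. (\<Sum>x\<leftarrow>xs. c x * f x t) \<partial>M) = (\<Sum>x\<leftarrow>xs. c x * (\<integral>\<^sup>+t. f x t \<partial>M))"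
proof -
  have "(\<integral>\<^sup>+t. (\<Sum>i<length xs. c (xs ! i) * f (xs ! i) t) \<partial>M)
      = (\<Sum>i<length xs. c (xs ! i) * (\<integral>\<^sup>+t. f (xs ! i) t \<partial>M))"
    using assms by (subst nn_integral_sum) (auto simp: nn_integral_cmult)
  then show ?thesis
    by (simp add: sum_list_sum_nth atLeast0LessThan)
qed

definition segment_pair_mass ::
  "(complex \<times> complex) set \<Rightarrow> complex \<times> complex \<Rightarrow> complex \<times> complex \<Rightarrow> ennreal" where
  "segment_pair_mass D e e' = (\<integral>\<^sup>+v\<in>{0..<1}. (\<integral>\<^sup>+u\<in>{0..<1}.
     indicator D (linepath (fst e) (snd e) v, linepath (fst e') (snd e') u) \<partial>lborel) \<partial>lborel)"

lemma emeasure_pair_arclen_measure: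
  assumes D [measurable]: "D \<in> sets (borel \<Otimes>\<^sub>M borel)"
  shows "emeasure (arclen_measure P \<Otimes>\<^sub>M arclen_measure P) D
     = (\<Sum>e\<leftarrow>poly_edges P. \<Sum>e'\<leftarrow>poly_edges P.
          edge_weight (poly_len P) e * edge_weight (poly_len P) e' * segment_pair_mass D e e')"
proof -
  let ?M = "arclen_measure P" and ?w = "edge_weight (poly_len P)"
  interpret finite_measure ?M by (rule finite_measure_arclen_measure)
  have D': "D \<in> sets (?M \<Otimes>\<^sub>M ?M)"
    using D by (simp cong: sets_pair_measure_cong)
  have slice: "emeasure ?M (Pair x -` D) = (\<Sum>e'\<leftarrow>poly_edges P. ?w e' *
       (\<integral>\<^sup>+u\<in>{0..<1}. indicator D (x, linepath (fst e') (snd e') u) \<partial>lborel))" for x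
  proof -
    have "(\<integral>\<^sup>+y. indicator D (x, y) \<partial>?M) = (\<integral>\<^sup>+y. indicator (Pair x -` D) y \<partial>?M)"
      by (intro nn_integral_cong) (simp split: split_indicator)
    then have "emeasure ?M (Pair x -` D) = (\<integral>\<^sup>+y. indicator D (x, y) \<partial>?M)"
      using sets_Pair1[OF D'] by simp
    then show ?thesis
      by (simp add: nn_integral_arclen_measure)
  qed
  have "emeasure (?M \<Otimes>\<^sub>M ?M) D = (\<integral>\<^sup>+x. emeasure ?M (Pair x -` D) \<partial>?M)"
    by (rule emeasure_pair_measure_alt[OF D'])
  also have "\<dots> = (\<Sum>e\<leftarrow>poly_edges P. ?w e * (\<integral>\<^sup>+v\<in>{0..<1}.
       (\<Sum>e'\<leftarrow>poly_edges P. ?w e' * (\<integral>\<^sup>+u\<in>{0..<1}.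
          indicator D (linepath (fst e) (snd e) v, linepath (fst e') (snd e') u) \<partial>lborel)) \<partial>lborel))"
    using measurable_emeasure_Pair[OF D']
    by (simp add: nn_integral_arclen_measure slice cong: measurable_cong_sets)
  also have "\<dots> = (\<Sum>e\<leftarrow>poly_edges P. \<Sum>e'\<leftarrow>poly_edges P. ?w e * ?w e' * segment_pair_mass D e e')"
    by (simp add: segment_pair_mass_def sum_list_mult_const[symmetric] mult.assoc
        nn_integral_sum_list_cmult sum_list_const_mult)
  finally show ?thesis .
qed

lemma dist_le_sets_pair_borel:
  "{(x, y). dist x y \<le> r}
     \<in> sets (borel \<Otimes>\<^sub>M borel :: ('a::{metric_space, second_countable_topology} \<times> 'a) measure)"
proof -
  have "{(x::'a, y). dist x y \<le> r} = {z \<in> space (borel \<Otimes>\<^sub>M borel). dist (fst z) (snd z) \<le> r}"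
    by (auto simp: space_pair_measure)
  also have "\<dots> \<in> sets (borel \<Otimes>\<^sub>M borel)" by measurable
  finally show ?thesis .
qed

definition rotate_edge :: "complex \<Rightarrow> complex \<times> complex \<Rightarrow> complex \<times> complex" where
  "rotate_edge c e = (c * fst e, c * snd e)"

lemma rotate_edge_rotate_edge: "rotate_edge a (rotate_edge b e) = rotate_edge (a * b) e"
  by (simp add: rotate_edge_def mult.assoc)

lemma linepath_mult_left: "linepath (c * p) (c * q) u = c * linepath p q u" for c p q :: complex
  unfolding linepath_def scaleR_conv_of_real by algebra

lemma edge_weight_rotate_edge: "norm c = 1 \<Longrightarrow> edge_weight L (rotate_edge c e) = edge_weight L e"
  by (simp add: edge_weight_def rotate_edge_def dist_mult_left)

lemma segment_pair_mass_rotate_edge: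
  "norm c = 1 \<Longrightarrow> segment_pair_mass {(x, y). dist x y \<le> r} (rotate_edge c e) (rotate_edge c e')
     = segment_pair_mass {(x, y). dist x y \<le> r} e e'"
  by (simp add: segment_pair_mass_def rotate_edge_def linepath_mult_left dist_mult_left indicator_def)

section \<open>The distance distribution of the curves\<close>

lemma octv_add: "octv (k + l) = octv k * octv l"
  by (simp add: octv_def cis_mult distrib_right add_divide_distrib)

lemma octv_mod_8: "octv (k mod 8) = octv k"
proof -
  have "octv k = octv (k mod 8) * octv (8 * (k div 8))"
    using octv_add[of "k mod 8" "8 * (k div 8)"] by simp
  moreover have "octv (8 * (k div 8)) = 1"
    using cis_multiple_2pi[of "real (k div 8)"] by (simp add: octv_def mult_ac)
  ultimately show ?thesis by simp
qed

lemma norm_octv [simp]: "norm (octv k) = 1"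
  by (simp add: octv_def)

lemma apex_eq_octv_mult: "apex k = octv k * apex 0"
  by (simp add: apex_def octv_def cis_mult algebra_simps add_divide_distrib)

lemma octv_eq_octv_mult_mod:
  assumes "k < 8"
  shows "octv l = octv k * octv ((l + 8 - k) mod 8)"
proof -
  have "octv k * octv ((l + 8 - k) mod 8) = octv (l + 8)"
    using assms by (simp add: octv_mod_8 octv_add[symmetric])
  also have "\<dots> = octv l"
    using octv_mod_8[of "l + 8"] octv_mod_8[of l] by simp
  finally show ?thesis ..
qed

definition curve_block :: "nat set \<Rightarrow> nat \<Rightarrow> complex list" where
  "curve_block S k = (if k \<in> S then [octv k, apex k] else [octv k])"

definition base_edges :: "bool \<Rightarrow> (complex \<times> complex) list" where
  "base_edges b = (if b then [(1, apex 0), (apex 0, octv 1)] else [(1, octv 1)])"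

lemma zip_curve_block:
  "zip (curve_block S k) (tl (curve_block S k) @ [hd (curve_block S (Suc k mod 8))])
     = map (rotate_edge (octv k)) (base_edges (k \<in> S))"
proof -
  have "hd (curve_block S (Suc k mod 8)) = octv k * octv 1"
    by (simp add: curve_block_def octv_mod_8 octv_add[symmetric])
  then show ?thesis
    by (simp add: curve_block_def base_edges_def rotate_edge_def apex_eq_octv_mult[of k])
qed

lemma poly_edges_curve_vertices:
  "poly_edges (curve_vertices S) = concat (map (\<lambda>k. map (rotate_edge (octv k)) (base_edges (k \<in> S))) [0..<8])"
proof -
  let ?Bs = "map (curve_block S) [0..<8]"
  have "curve_vertices S = concat ?Bs"
    by (simp add: curve_vertices_def curve_block_def[abs_def])
  moreover have "[] \<notin> set ?Bs"
    by (auto simp: curve_block_def)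
  moreover have "rotate1 [0..<8] = map (\<lambda>k. (k + 1) mod 8) [0..<8::nat]"
    by (simp add: upt_rec)
  then have "rotate1 ?Bs = map (\<lambda>k. curve_block S ((k + 1) mod 8)) [0..<8]"
    by (simp only: rotate1_map map_map comp_def)
  ultimately show ?thesis
    by (simp add: poly_edges_concat zip_map_map zip_same_conv_map zip_curve_block comp_def)
qed

lemma sum_list_map_concat: "(\<Sum>x\<leftarrow>concat xss. f x) = (\<Sum>xs\<leftarrow>xss. \<Sum>x\<leftarrow>xs. f x)"
  by (induction xss) simp_all

lemma sum_list_swap:
  fixes f :: "'a \<Rightarrow> 'b \<Rightarrow> 'c::comm_monoid_add"
  shows "(\<Sum>x\<leftarrow>xs. \<Sum>y\<leftarrow>ys. f x y) = (\<Sum>y\<leftarrow>ys. \<Sum>x\<leftarrow>xs. f x y)"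
  by (induction xs) (simp_all add: sum_list_addf)

lemma sum_list_concat_map_pairs:
  fixes \<Phi> :: "'a \<Rightarrow> 'a \<Rightarrow> 'b::comm_monoid_add"
  shows "(\<Sum>e\<leftarrow>concat (map B ks). \<Sum>e'\<leftarrow>concat (map B ks). \<Phi> e e')
     = (\<Sum>k\<leftarrow>ks. \<Sum>l\<leftarrow>ks. \<Sum>e\<leftarrow>B k. \<Sum>e'\<leftarrow>B l. \<Phi> e e')"
proof -
  have "(\<Sum>e\<leftarrow>concat (map B ks). \<Sum>e'\<leftarrow>concat (map B ks). \<Phi> e e')
      = (\<Sum>k\<leftarrow>ks. \<Sum>e\<leftarrow>B k. \<Sum>l\<leftarrow>ks. \<Sum>e'\<leftarrow>B l. \<Phi> e e')"
    by (simp add: sum_list_map_concat comp_def)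
  also have "\<dots> = (\<Sum>k\<leftarrow>ks. \<Sum>l\<leftarrow>ks. \<Sum>e\<leftarrow>B k. \<Sum>e'\<leftarrow>B l. \<Phi> e e')"
    by (rule arg_cong[where f = sum_list], rule map_cong[OF refl], rule sum_list_swap)
  finally show ?thesis .
qed

definition block_pair_mass :: "real \<Rightarrow> real \<Rightarrow> bool \<Rightarrow> bool \<Rightarrow> nat \<Rightarrow> ennreal" where
  "block_pair_mass L r a b d = (\<Sum>e\<leftarrow>base_edges a. \<Sum>e'\<leftarrow>map (rotate_edge (octv d)) (base_edges b).
     edge_weight L e * edge_weight L e' * segment_pair_mass {(x, y). dist x y \<le> r} e e')"

lemma emeasure_curve_vertices_dist_le:
  "emeasure (arclen_measure (curve_vertices S) \<Otimes>\<^sub>M arclen_measure (curve_vertices S)) {(x, y). dist x y \<le> r}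
     = (\<Sum>k<8. \<Sum>l<8. block_pair_mass (poly_len (curve_vertices S)) r (k \<in> S) (l \<in> S) ((l + 8 - k) mod 8))"
proof -
  let ?L = "poly_len (curve_vertices S)"
  let ?\<Phi> = "\<lambda>e e'. edge_weight ?L e * edge_weight ?L e' * segment_pair_mass {(x, y). dist x y \<le> r} e e'"
  have block: "(\<Sum>e\<leftarrow>map (rotate_edge (octv k)) (base_edges a).
                  \<Sum>e'\<leftarrow>map (rotate_edge (octv l)) (base_edges b). ?\<Phi> e e')
      = block_pair_mass ?L r a b ((l + 8 - k) mod 8)" if "k < 8" for k l a b
    using that by (simp add: block_pair_mass_def octv_eq_octv_mult_mod[of k l] comp_def
        rotate_edge_rotate_edge[symmetric] edge_weight_rotate_edge segment_pair_mass_rotate_edge)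
  show ?thesis
    unfolding emeasure_pair_arclen_measure[OF dist_le_sets_pair_borel] poly_edges_curve_vertices
      sum_list_concat_map_pairs sum_list_map_upt
    by (intro sum.cong refl block) simp
qed

lemma poly_len_curve_vertices:
  "poly_len (curve_vertices S) = (\<Sum>k<8. \<Sum>e\<leftarrow>base_edges (k \<in> S). dist (fst e) (snd e))"
  by (simp add: poly_len_eq_sum_poly_edges poly_edges_curve_vertices sum_list_map_concat sum_list_map_upt
      rotate_edge_def dist_mult_left comp_def)

section \<open>Non-congruence\<close>

lemma norm_apex [simp]: "norm (apex k) = 7/5"
  by (simp add: apex_def norm_mult)

lemma curve_vertices_not_Nil: "curve_vertices S \<noteq> []"
  by (simp add: curve_vertices_def upt_conv_Cons)

lemma apex_in_poly_set_curve_vertices: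
  assumes "k \<in> S" "k < 8"
  shows "apex k \<in> poly_set (curve_vertices S)"
proof -
  have "apex k \<in> set (curve_vertices S)"
    using assms by (force simp: curve_vertices_def)
  then show ?thesis using set_subset_poly_set by blast
qed

lemma poly_edges_curve_vertices_obtain:
  assumes "e \<in> set (poly_edges (curve_vertices S))"
  obtains k b where "k < 8" "b \<in> set (base_edges (k \<in> S))" "e = rotate_edge (octv k) b"
  using assms by (auto simp: poly_edges_curve_vertices)

lemma norm_poly_edges_curve_vertices:
  assumes "e \<in> set (poly_edges (curve_vertices S))"
  shows "norm (fst e) \<le> 7/5 \<and> norm (snd e) \<le> 7/5 \<and> (norm (fst e) < 7/5 \<or> norm (snd e) < 7/5)"
proof -
  obtain k b where "b \<in> set (base_edges (k \<in> S))" "e = rotate_edge (octv k) b"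
    using poly_edges_curve_vertices_obtain[OF assms] .
  then show ?thesis
    by (auto simp: base_edges_def rotate_edge_def norm_mult split: if_splits)
qed

lemma poly_edges_curve_vertices_fst_norm_eq:
  assumes "e \<in> set (poly_edges (curve_vertices S))" "norm (fst e) = 7/5"
  shows "\<exists>k\<in>S. k < 8 \<and> fst e = apex k"
proof -
  obtain k b where "k < 8" "b \<in> set (base_edges (k \<in> S))" "e = rotate_edge (octv k) b"
    using poly_edges_curve_vertices_obtain[OF assms(1)] .
  with assms(2) show ?thesis
    by (auto simp: base_edges_def rotate_edge_def norm_mult apex_eq_octv_mult[of k] split: if_splits)
qed

lemma curve_vertices_norm_le:
  assumes "y \<in> poly_set (curve_vertices S)"
  shows "norm y \<le> 7/5"
  by (rule poly_set_norm_le[OF assms curve_vertices_not_Nil]) (meson norm_poly_edges_curve_vertices)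

lemma curve_vertices_norm_eq_imp_apex:
  assumes "y \<in> poly_set (curve_vertices S)" "norm y = 7/5"
  shows "\<exists>k\<in>S. k < 8 \<and> y = apex k"
proof -
  have "\<exists>e\<in>set (poly_edges (curve_vertices S)). y = fst e"
    by (rule poly_set_norm_eq_imp_vertex[OF assms(1) curve_vertices_not_Nil assms(2)]) (rule norm_poly_edges_curve_vertices)
  then obtain e where "e \<in> set (poly_edges (curve_vertices S))" "y = fst e" ..
  then show ?thesis
    using poly_edges_curve_vertices_fst_norm_eq assms(2) by blast
qed

lemma dist_cis_1_power2: "(dist (cis a) 1)\<^sup>2 = 2 - 2 * cos a"
  by (simp add: dist_norm cmod_power2 power2_diff)

lemma angle_octv_le_pi: "d \<le> 4 \<Longrightarrow> real d * pi / 4 \<le> pi"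
  using mult_right_mono[of "real d" 4 "pi / 4"] by simp

lemma dist_octv_1_inj:
  assumes "d \<le> 4" "d' \<le> 4" "dist (octv d) 1 = dist (octv d') 1"
  shows "d = d'"
proof -
  have "cos (real d * pi / 4) = cos (real d' * pi / 4)"
    using arg_cong[OF assms(3), of "\<lambda>x. x\<^sup>2"] by (simp add: octv_def dist_cis_1_power2)
  then have "real d * pi / 4 = real d' * pi / 4"
    using angle_octv_le_pi[OF assms(1)] angle_octv_le_pi[OF assms(2)] by (rule_tac cos_inj_pi) simp_all
  then show ?thesis by simp
qed

lemma dist_octv_1_reflect:
  assumes "d \<le> 8"
  shows "dist (octv (8 - d)) 1 = dist (octv d) 1"
proof -
  have "cos (real (8 - d) * pi / 4) = cos (2 * pi - real d * pi / 4)"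
    using assms by (intro arg_cong[where f = cos]) (simp add: of_nat_diff field_simps)
  then have "(dist (octv (8 - d)) 1)\<^sup>2 = (dist (octv d) 1)\<^sup>2"
    by (simp add: octv_def dist_cis_1_power2)
  then show ?thesis by (simp add: power2_eq_iff_nonneg)
qed

lemma dist_octv_1_eq_iff:
  assumes "d < 8" "d' < 8"
  shows "dist (octv d) 1 = dist (octv d') 1 \<longleftrightarrow> d = d' \<or> d + d' = 8"
proof -
  have fold: "dist (octv n) 1 = dist (octv (min n (8 - n))) 1" if "n < 8" for n
    using that dist_octv_1_reflect[of n] by (simp add: min_def)
  have "dist (octv d) 1 = dist (octv d') 1
      \<longleftrightarrow> dist (octv (min d (8 - d))) 1 = dist (octv (min d' (8 - d'))) 1"
    by (simp only: fold[OF assms(1)] fold[OF assms(2)])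
  also have "\<dots> \<longleftrightarrow> min d (8 - d) = min d' (8 - d')"
    using dist_octv_1_inj[of "min d (8 - d)" "min d' (8 - d')"] by (auto simp del: min_def)
  also have "\<dots> \<longleftrightarrow> d = d' \<or> d + d' = 8"
    using assms by (auto simp: min_def)
  finally show ?thesis .
qed

lemma dist_octv_octv:
  assumes "k < 8"
  shows "dist (octv j) (octv k) = dist (octv ((j + 8 - k) mod 8)) 1"
proof -
  have "dist (octv j) (octv k) = dist (octv k * octv ((j + 8 - k) mod 8)) (octv k * 1)"
    using octv_eq_octv_mult_mod[OF assms, of j] by simp
  also have "\<dots> = dist (octv ((j + 8 - k) mod 8)) 1"
    by (simp only: dist_mult_left norm_octv mult_1_left)
  finally show ?thesis .
qed

lemma dist_apex: "k < 8 \<Longrightarrow> dist (apex j) (apex k) = 7/5 * dist (octv ((j + 8 - k) mod 8)) 1"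
  by (simp add: apex_eq_octv_mult[of j] apex_eq_octv_mult[of k] dist_mult_right dist_octv_octv)

lemma dist_apex_eq_iff:
  assumes "k < 8" "k' < 8"
  shows "dist (apex j) (apex k) = dist (apex j') (apex k')
     \<longleftrightarrow> (j + 8 - k) mod 8 = (j' + 8 - k') mod 8 \<or> (j + 8 - k) mod 8 + (j' + 8 - k') mod 8 = 8"
  using assms by (simp add: dist_apex dist_octv_1_eq_iff)

lemma apex_antipodal:
  assumes "k < 8" "(j + 8 - k) mod 8 = 4"
  shows "apex j = - apex k"
proof -
  have "octv 4 = -1" by (simp add: octv_def)
  then show ?thesis
    using octv_eq_octv_mult_mod[OF assms(1), of j] assms(2)
    by (simp add: apex_eq_octv_mult[of j] apex_eq_octv_mult[of k])
qed

lemma parallelogram_law_dist: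
  fixes b c :: "'a::real_inner"
  shows "(dist b c)\<^sup>2 + (dist b (- c))\<^sup>2 = 2 * (norm b)\<^sup>2 + 2 * (norm c)\<^sup>2"
  by (simp add: dist_norm power2_norm_eq_inner inner_diff_left inner_diff_right inner_add_left inner_add_right
      inner_commute)

lemma norm_eq_if_dist_antipodal_eq:
  fixes a b c d :: "'a::real_inner"
  assumes "dist b c = dist a d" "dist b (- c) = dist a (- d)" "norm c = norm d"
  shows "norm b = norm a"
proof -
  have "(norm b)\<^sup>2 = (norm a)\<^sup>2"
    using parallelogram_law_dist[of b c] parallelogram_law_dist[of a d] assms by simp
  then show ?thesis by (simp add: power2_eq_iff_nonneg)
qed

lemma isometry_image_apex:
  assumes isom: "\<And>x y. dist (f x) (f y) = dist x y"
    and into: "f ` poly_set (curve_vertices S) \<subseteq> poly_set (curve_vertices T)"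
    and "0 \<in> S" "4 \<in> S" "m \<in> S" "m < 8"
  shows "\<exists>i\<in>T. i < 8 \<and> f (apex m) = apex i"
proof -
  have on_curve: "f (apex n) \<in> poly_set (curve_vertices T)" if "n \<in> S" "n < 8" for n
    using into apex_in_poly_set_curve_vertices[OF that] by blast
  have on_curve_0: "f (apex 0) \<in> poly_set (curve_vertices T)"
    and on_curve_4: "f (apex 4) \<in> poly_set (curve_vertices T)"
    by (simp_all add: on_curve assms(3,4))
  have apex_4: "apex 4 = - apex 0"
    by (rule apex_antipodal) simp_all
  have "dist (apex 0) (apex 4) = 14/5"
    by (simp add: apex_4 dist_norm norm_mult flip: mult_2)
  then have "dist (f (apex 0)) (f (apex 4)) = 14/5"
    by (simp only: isom)
  moreover have "dist (f (apex 0)) (f (apex 4)) \<le> norm (f (apex 0)) + norm (f (apex 4))"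
    by (simp add: dist_norm norm_triangle_ineq4)
  moreover have "norm (f (apex 0)) \<le> 7/5" "norm (f (apex 4)) \<le> 7/5"
    using curve_vertices_norm_le[OF on_curve_0] curve_vertices_norm_le[OF on_curve_4] by simp_all
  ultimately have "norm (f (apex 0)) = 7/5" "norm (f (apex 4)) = 7/5"
    by linarith+
  then obtain j k where "f (apex 0) = apex j" "f (apex 4) = apex k" "k < 8"
    using curve_vertices_norm_eq_imp_apex[OF on_curve_0] curve_vertices_norm_eq_imp_apex[OF on_curve_4]
    by blast
  moreover have "(j + 8 - k) mod 8 = 4"
    using isom[of "apex 0" "apex 4"] calculation dist_apex_eq_iff[of k 4 j 0] by auto
  ultimately have antipodal: "f (apex 4) = - f (apex 0)"
    using apex_antipodal[of k j] by auto
  have "norm (f (apex m)) = norm (apex m)"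
  proof (rule norm_eq_if_dist_antipodal_eq)
    show "dist (f (apex m)) (f (apex 0)) = dist (apex m) (apex 0)"
      "dist (f (apex m)) (- f (apex 0)) = dist (apex m) (- apex 0)"
      "norm (f (apex 0)) = norm (apex 0)"
      using isom \<open>norm (f (apex 0)) = 7/5\<close> by (simp_all add: antipodal[symmetric] apex_4[symmetric])
  qed
  then show ?thesis
    using curve_vertices_norm_eq_imp_apex[OF on_curve[OF assms(5,6)]] by simp
qed

lemma curve_vertices_not_congruent:
  "\<not> (\<exists>f :: complex \<Rightarrow> complex. (\<forall>x y. dist (f x) (f y) = dist x y) \<and>
        f ` poly_set (curve_vertices {0, 4, 5, 7}) = poly_set (curve_vertices {0, 1, 4, 7}))"
proof
  let ?T = "{0, 1, 4, 7 :: nat}"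
  assume "\<exists>f :: complex \<Rightarrow> complex. (\<forall>x y. dist (f x) (f y) = dist x y) \<and>
        f ` poly_set (curve_vertices {0, 4, 5, 7}) = poly_set (curve_vertices ?T)"
  then obtain f :: "complex \<Rightarrow> complex" where isom: "\<And>x y. dist (f x) (f y) = dist x y"
    and onto: "f ` poly_set (curve_vertices {0, 4, 5, 7}) = poly_set (curve_vertices ?T)"
    by blast
  have apex_image: "\<exists>i\<in>?T. i < 8 \<and> f (apex m) = apex i" if "m \<in> {0, 4, 5, 7}" for m
    by (rule isometry_image_apex[OF isom equalityD1[OF onto]]) (use that in auto)
  obtain j where "j \<in> ?T" "j < 8" "f (apex 0) = apex j" using apex_image[of 0] by blast
  obtain k where "k \<in> ?T" "k < 8" "f (apex 4) = apex k" using apex_image[of 4] by blast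
  obtain i5 where "i5 \<in> ?T" "f (apex 5) = apex i5" using apex_image[of 5] by blast
  obtain i7 where "i7 \<in> ?T" "f (apex 7) = apex i7" using apex_image[of 7] by blast
  have "dist (apex j) (apex k) = dist (apex 0) (apex 4)"
    "dist (apex i5) (apex j) = dist (apex 5) (apex 0)" "dist (apex i7) (apex j) = dist (apex 7) (apex 0)"
    using isom by (metis \<open>f (apex 0) = apex j\<close> \<open>f (apex 4) = apex k\<close> \<open>f (apex 5) = apex i5\<close>
        \<open>f (apex 7) = apex i7\<close>)+
  then have "(j + 8 - k) mod 8 = 4" "(i5 + 8 - j) mod 8 \<in> {3, 5}" "(i7 + 8 - j) mod 8 \<in> {1, 7}"
    using \<open>j < 8\<close> \<open>k < 8\<close> by (auto simp: dist_apex_eq_iff)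
  moreover have "j = 0 \<or> j = 4"
    using calculation(1) \<open>j \<in> ?T\<close> \<open>k \<in> ?T\<close> by auto
  ultimately show False
    using \<open>i5 \<in> ?T\<close> \<open>i7 \<in> ?T\<close> by auto
qed

theorem proposition5p4:
  shows "\<not> (\<exists>f :: complex \<Rightarrow> complex. (\<forall>x y. dist (f x) (f y) = dist x y) \<and>
              f ` poly_set (curve_vertices {0, 4, 5, 7}) = poly_set (curve_vertices {0, 1, 4, 7}))
         \<and> (\<forall>r \<ge> 0. dist_distr (arclen_measure (curve_vertices {0, 4, 5, 7})) r
                    = dist_distr (arclen_measure (curve_vertices {0, 1, 4, 7})) r)"
proof
  show "\<not> (\<exists>f :: complex \<Rightarrow> complex. (\<forall>x y. dist (f x) (f y) = dist x y) \<and>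
              f ` poly_set (curve_vertices {0, 4, 5, 7}) = poly_set (curve_vertices {0, 1, 4, 7}))"
    by (rule curve_vertices_not_congruent)
  have "poly_len (curve_vertices {0, 4, 5, 7}) = poly_len (curve_vertices {0, 1, 4, 7})"
    by (simp add: poly_len_curve_vertices lessThan_nat_numeral)
  then show "\<forall>r \<ge> 0. dist_distr (arclen_measure (curve_vertices {0, 4, 5, 7})) r
                    = dist_distr (arclen_measure (curve_vertices {0, 1, 4, 7})) r"
    \<comment> \<open>the 64 block-pair terms of the two curves agree up to order\<close>
    by (simp add: dist_distr_def measure_def emeasure_curve_vertices_dist_le lessThan_nat_numeral ac_simps)
qed

end
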